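(* Let $A=\{a_1,a_2,\dots,a_k\}$ be a set of $k$ distinct positive integers with $\gcd(a_1,\dots,a_k)=1$. Then, as $n\to\infty$, $$N^p_A(n)\sim\frac{1}{k!}\,\frac{\frac{1}{a_1}+\frac{1}{a_2}+\cdots+\frac{1}{a_k}}{a_1a_2\cdots a_k}\,n^k.$$
   Context: $N^p_A(n)$ is the total number of parts, summed over all partitions of $n$ (unordered sequences of positive integers summing to $n$) with all parts in $A$. *)

theory Defs
  imports Complex_Main "HOL-Library.Multiset" "HOL-Library.Landau_Symbols"
begin

definition partitions_in :: "nat set \<Rightarrow> nat \<Rightarrow> nat multiset set" where
  "partitions_in A n = {M. set_mset M \<subseteq> A \<and> sum_mset M = n}"

definition NpA :: "nat set \<Rightarrow> nat \<Rightarrow> nat" where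
  "NpA A n = (\<Sum>M\<in>partitions_in A n. size M)"

end

theory Submission
  imports Defs
begin

text \<open>Count the parts of each size separately: the number of parts equal to \<open>a\<close>, summed over
  all partitions of \<open>n + a\<close>, is the number of partitions of \<open>n\<close> into parts from \<open>A\<close> and one
  additional, distinguishable part size \<open>a\<close>. By Schur's theorem this restricted
  partition function, with \<open>k + 1\<close> coprime part sizes, grows like
  \<open>n\<^sup>k / (k! \<cdot> a \<cdot> \<Prod>A)\<close>; summing over \<open>a \<in> A\<close> gives the claim.

  For Schur's theorem, the number of partitions of all \<open>m \<le> n\<close> into parts \<open>b\<^sub>1, \<dots>, b\<^sub>r\<close>
  counts the lattice points of a simplex and lies between \<open>n\<^sup>r / (r! \<Prod>b\<^sub>i)\<close> and
  \<open>(n + \<Sum>b\<^sub>i)\<^sup>r / (r! \<Prod>b\<^sub>i)\<close>. Adding a part \<open>b\<close> turns this cumulative count into sums of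
  the partition function over windows of \<open>b\<close> consecutive arguments, and since coprime part
  sizes make the partition function eventually monotone, a single value is squeezed between
  two such window sums.\<close>

section \<open>Additive submonoids of the naturals\<close>

lemma Gcd_nat_set_bezout:
  fixes A :: "nat set"
  assumes "finite A"
  shows "\<exists>c :: nat \<Rightarrow> int. (\<Sum>x\<in>A. c x * int x) = int (Gcd A)"
  using assms
proof (induction A rule: finite_induct)
  case (insert a B)
  then obtain c where c: "(\<Sum>x\<in>B. c x * int x) = int (Gcd B)"
    by blast
  obtain u v where uv: "u * int a + v * int (Gcd B) = gcd (int a) (int (Gcd B))"
    using bezout_int by blast
  define c' where "c' x = (if x = a then u else v * c x)" for x
  have "(\<Sum>x\<in>insert a B. c' x * int x) = u * int a + v * (\<Sum>x\<in>B. c x * int x)"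
    using insert.hyps by (auto simp: c'_def sum_distrib_left mult.assoc intro!: sum.cong)
  also have "\<dots> = int (Gcd (insert a B))"
    using uv c by simp
  finally show ?case
    by blast
qed simp

text \<open>A Bezout combination of the generators yields members \<open>N\<close> and \<open>N + 1\<close> of the
  submonoid, and every \<open>m \<ge> N\<^sup>2\<close> is a nonnegative combination of these two.\<close>
lemma additive_submonoid_contains_all_large:
  fixes S A :: "nat set"
  assumes zero: "0 \<in> S" and add: "\<And>x y. x \<in> S \<Longrightarrow> y \<in> S \<Longrightarrow> x + y \<in> S"
    and "finite A" "A \<subseteq> S" "Gcd A = 1"
  shows "\<exists>F. \<forall>m\<ge>F. m \<in> S"
proof -
  have mult: "c * x \<in> S" if "x \<in> S" for c x
    by (induction c) (simp_all add: zero add that)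
  have sum: "(\<Sum>x\<in>A. f x) \<in> S" if "\<And>x. x \<in> A \<Longrightarrow> f x \<in> S" for f :: "nat \<Rightarrow> nat"
    using \<open>finite A\<close> that by (induction A rule: finite_induct) (simp_all add: zero add)
  obtain c :: "nat \<Rightarrow> int" where c: "(\<Sum>x\<in>A. c x * int x) = 1"
    using Gcd_nat_set_bezout[OF \<open>finite A\<close>] \<open>Gcd A = 1\<close> by auto
  define P where "P = (\<Sum>x\<in>A. nat (c x) * x)"
  define N where "N = (\<Sum>x\<in>A. nat (- c x) * x)"
  have "P \<in> S" "N \<in> S"
    unfolding P_def N_def using \<open>A \<subseteq> S\<close> by (auto intro!: sum mult)
  have "int P - int N = (\<Sum>x\<in>A. (int (nat (c x)) - int (nat (- c x))) * int x)"
    by (simp add: P_def N_def sum_subtractf left_diff_distrib)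
  also have "\<dots> = (\<Sum>x\<in>A. c x * int x)"
    by (intro sum.cong refl) simp
  finally have "int P - int N = 1"
    using c by simp
  then have "P = N + 1"
    by simp
  have "m \<in> S" if "N * N \<le> m" for m
  proof (cases "N = 0")
    case True
    then show ?thesis
      using mult[OF \<open>P \<in> S\<close>, of m] \<open>P = N + 1\<close> by simp
  next
    case False
    define q s where "q = m div N" and "s = m mod N"
    have "s < N" "N \<le> q"
      using False that by (simp_all add: q_def s_def less_eq_div_iff_mult_less_eq)
    then have "m = (q - s) * N + s * P"
      using \<open>P = N + 1\<close> by (simp add: q_def s_def algebra_simps diff_mult_distrib)
    then show ?thesis
      using \<open>P \<in> S\<close> \<open>N \<in> S\<close> by (simp add: add mult)
  qed
  then show ?thesis
    by blast
qed

section \<open>Riemann sums and normalised limits\<close>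

lemma power_diff_bounds:
  fixes u v :: real
  assumes "0 \<le> u" "u \<le> v"
  shows "real (Suc r) * (v - u) * u ^ r \<le> v ^ Suc r - u ^ Suc r"
    and "v ^ Suc r - u ^ Suc r \<le> real (Suc r) * (v - u) * v ^ r"
proof -
  have eq: "v ^ Suc r - u ^ Suc r = (v - u) * (\<Sum>p<Suc r. v ^ p * u ^ (r - p))"
    by (rule diff_power_eq_sum)
  have term_lower: "u ^ r \<le> v ^ p * u ^ (r - p)" and term_upper: "v ^ p * u ^ (r - p) \<le> v ^ r"
    if "p < Suc r" for p
  proof -
    have "u ^ r = u ^ p * u ^ (r - p)" and "v ^ r = v ^ p * v ^ (r - p)"
      using that by (simp_all flip: power_add)
    then show "u ^ r \<le> v ^ p * u ^ (r - p)" and "v ^ p * u ^ (r - p) \<le> v ^ r"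
      using assms by (auto intro!: mult_mono power_mono)
  qed
  have "(\<Sum>p<Suc r. u ^ r) \<le> (\<Sum>p<Suc r. v ^ p * u ^ (r - p))"
    and "(\<Sum>p<Suc r. v ^ p * u ^ (r - p)) \<le> (\<Sum>p<Suc r. v ^ r)"
    by (intro sum_mono; simp add: term_lower term_upper)+
  then have "real (Suc r) * u ^ r \<le> (\<Sum>p<Suc r. v ^ p * u ^ (r - p))"
    and "(\<Sum>p<Suc r. v ^ p * u ^ (r - p)) \<le> real (Suc r) * v ^ r"
    by simp_all
  then show "real (Suc r) * (v - u) * u ^ r \<le> v ^ Suc r - u ^ Suc r"
    and "v ^ Suc r - u ^ Suc r \<le> real (Suc r) * (v - u) * v ^ r"
    unfolding eq using assms by (auto simp: mult_ac intro: mult_left_mono)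
qed

lemma power_Suc_le_sum_multiples:
  fixes b n r :: nat
  assumes "b > 0"
  shows "real n ^ Suc r \<le> real (Suc r) * real b * (\<Sum>j\<le>n div b. real (n - j * b) ^ r)"
proof -
  define u where "u j = real (n - j * b) ^ Suc r" for j
  have "n < Suc (n div b) * b"
    using div_less_iff_less_mult[OF assms, of n "Suc (n div b)"] by simp
  then have "u (Suc (n div b)) = 0"
    by (simp add: u_def)
  then have "real n ^ Suc r = u 0 - u (Suc (n div b))"
    by (simp add: u_def)
  also have "\<dots> = (\<Sum>j\<le>n div b. u j - u (Suc j))"
    by (rule sum_telescope[symmetric])
  also have "\<dots> \<le> (\<Sum>j\<le>n div b. real (Suc r) * real b * real (n - j * b) ^ r)"
  proof (rule sum_mono)
    fix j
    have "real (n - j * b) - real b \<le> real (n - Suc j * b)"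
      by (simp add: of_nat_diff)
    then have "u j - u (Suc j) \<le> real (Suc r) * (real (n - j * b) - real (n - Suc j * b)) * real (n - j * b) ^ r"
      unfolding u_def by (intro power_diff_bounds(2)) auto
    also have "\<dots> \<le> real (Suc r) * real b * real (n - j * b) ^ r"
      using \<open>real (n - j * b) - real b \<le> real (n - Suc j * b)\<close>
      by (intro mult_right_mono mult_left_mono) auto
    finally show "u j - u (Suc j) \<le> real (Suc r) * real b * real (n - j * b) ^ r" .
  qed
  finally show ?thesis
    by (simp add: sum_distrib_left)
qed

lemma sum_multiples_le_power_Suc:
  fixes b n r :: nat and s :: real
  assumes "b > 0" "s \<ge> 0"
  shows "real (Suc r) * real b * (\<Sum>j\<le>n div b. (real (n - j * b) + s) ^ r) \<le> (real n + s + real b) ^ Suc r"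
proof -
  define x where "x j = real n - real j * real b + s" for j
  define v where "v j = (x j + real b) ^ Suc r" for j
  have x_nonneg: "x j \<ge> 0" and x_eq: "x j = real (n - j * b) + s" if "j \<le> n div b" for j
  proof -
    have "j * b \<le> n"
      using that assms(1) by (simp add: less_eq_div_iff_mult_less_eq)
    then show "x j = real (n - j * b) + s"
      by (simp add: x_def of_nat_diff)
    then show "x j \<ge> 0"
      using assms(2) by simp
  qed
  have "real (Suc r) * real b * (\<Sum>j\<le>n div b. (real (n - j * b) + s) ^ r) = (\<Sum>j\<le>n div b. real (Suc r) * real b * x j ^ r)"
    by (simp add: sum_distrib_left x_eq)
  also have "\<dots> \<le> (\<Sum>j\<le>n div b. v j - v (Suc j))"
  proof (rule sum_mono)
    fix j assume "j \<in> {..n div b}"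
    moreover have "x (Suc j) + real b = x j"
      by (simp add: x_def algebra_simps)
    ultimately show "real (Suc r) * real b * x j ^ r \<le> v j - v (Suc j)"
      using power_diff_bounds(1)[of "x j" "x j + real b" r] x_nonneg by (simp add: v_def)
  qed
  also have "\<dots> = v 0 - v (Suc (n div b))"
    by (rule sum_telescope)
  also have "\<dots> \<le> v 0"
  proof -
    have "v (Suc (n div b)) = x (n div b) ^ Suc r"
      by (simp add: v_def x_def algebra_simps)
    then show ?thesis
      using x_nonneg[of "n div b"] by simp
  qed
  also have "v 0 = (real n + s + real b) ^ Suc r"
    by (simp add: v_def x_def)
  finally show ?thesis .
qed

lemma tendsto_div_power_shift:
  fixes f :: "nat \<Rightarrow> real"
  assumes "(\<lambda>n. f n / real n ^ r) \<longlonglongrightarrow> l"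
  shows "(\<lambda>n. f (n + d) / real (n + e) ^ r) \<longlonglongrightarrow> l"
proof -
  have "(\<lambda>n. 1 + (real d - real e) / real (n + e)) \<longlonglongrightarrow> 1 + 0"
    using LIMSEQ_ignore_initial_segment[OF lim_const_over_n[of "real d - real e"], of e]
    by (intro tendsto_add) auto
  moreover have "\<forall>\<^sub>F n in sequentially. 1 + (real d - real e) / real (n + e) = real (n + d) / real (n + e)"
    using eventually_gt_at_top[of 0] by eventually_elim (simp add: field_simps)
  ultimately have "(\<lambda>n. real (n + d) / real (n + e)) \<longlonglongrightarrow> 1"
    by (simp add: Lim_transform_eventually)
  then have "(\<lambda>n. f (n + d) / real (n + d) ^ r * (real (n + d) / real (n + e)) ^ r) \<longlonglongrightarrow> l * 1 ^ r"
    using LIMSEQ_ignore_initial_segment[OF assms, of d] by (intro tendsto_mult tendsto_power) auto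
  moreover have "\<forall>\<^sub>F n in sequentially.
      f (n + d) / real (n + d) ^ r * (real (n + d) / real (n + e)) ^ r = f (n + d) / real (n + e) ^ r"
    using eventually_gt_at_top[of 0] by eventually_elim (simp add: power_divide)
  ultimately show ?thesis
    by (simp add: Lim_transform_eventually)
qed

lemma tendsto_div_power_sandwich:
  fixes f g :: "nat \<Rightarrow> real"
  assumes "\<And>n. g (n + d) \<le> f (n + e)" "\<And>n. f (n + e) \<le> g (n + d')"
    and "(\<lambda>n. g n / real n ^ r) \<longlonglongrightarrow> l"
  shows "(\<lambda>n. f n / real n ^ r) \<longlonglongrightarrow> l"
proof -
  have "(\<lambda>n. f (n + e) / real (n + e) ^ r) \<longlonglongrightarrow> l"
    using assms(1,2)
    by (intro tendsto_sandwich[OF _ _ tendsto_div_power_shift[OF assms(3), of d e]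
          tendsto_div_power_shift[OF assms(3), of d' e]] always_eventually allI divide_right_mono)
      auto
  then show ?thesis
    by (rule LIMSEQ_offset)
qed

section \<open>Restricted partition functions\<close>

text \<open>Partitions of \<open>n\<close> into parts from the list \<open>L\<close>, where an entry occurring twice in \<open>L\<close>
  counts as two distinguishable kinds of part (entries \<open>0\<close> are ignored).\<close>
fun num_partitions :: "nat list \<Rightarrow> nat \<Rightarrow> nat" where
  "num_partitions [] n = (if n = 0 then 1 else 0)"
| "num_partitions (b # L) n = (\<Sum>j\<le>n div b. num_partitions L (n - j * b))"

definition num_partitions_upto :: "nat list \<Rightarrow> nat \<Rightarrow> nat" where
  "num_partitions_upto L n = (\<Sum>m\<le>n. num_partitions L m)"

lemma sum_multiples_step:
  fixes f :: "nat \<Rightarrow> 'a::comm_monoid_add"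
  assumes "b > 0" "b \<le> m"
  shows "(\<Sum>j\<le>m div b. f (m - j * b)) = f m + (\<Sum>j\<le>(m - b) div b. f (m - b - j * b))"
proof -
  have "m div b = Suc ((m - b) div b)"
    using assms by (simp add: le_div_geq)
  then have "(\<Sum>j\<le>m div b. f (m - j * b)) = f m + (\<Sum>j\<le>(m - b) div b. f (m - Suc j * b))"
    by (simp only: sum.atMost_Suc_shift) simp
  also have "(\<Sum>j\<le>(m - b) div b. f (m - Suc j * b)) = (\<Sum>j\<le>(m - b) div b. f (m - b - j * b))"
    by (simp add: diff_diff_add add.commute)
  finally show ?thesis .
qed

lemma num_partitions_Cons_step:
  assumes "b > 0"
  shows "num_partitions (b # L) n = num_partitions L n + (if b \<le> n then num_partitions (b # L) (n - b) else 0)"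
  using assms by (simp add: sum_multiples_step)

lemma num_partitions_upto_Cons_step:
  assumes "b > 0"
  shows "num_partitions_upto (b # L) n =
    num_partitions_upto L n + (if b \<le> n then num_partitions_upto (b # L) (n - b) else 0)"
proof -
  have "num_partitions_upto (b # L) n =
      num_partitions_upto L n + (\<Sum>m\<le>n. if b \<le> m then num_partitions (b # L) (m - b) else 0)"
    unfolding num_partitions_upto_def
    by (subst sum.cong[OF refl num_partitions_Cons_step[OF assms]]) (simp add: sum.distrib)
  also have "(\<Sum>m\<le>n. if b \<le> m then num_partitions (b # L) (m - b) else 0) =
      (\<Sum>m\<in>{b..n}. num_partitions (b # L) (m - b))"
    by (rule sum.mono_neutral_cong_right) auto
  also have "\<dots> = (if b \<le> n then num_partitions_upto (b # L) (n - b) else 0)"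
  proof (cases "b \<le> n")
    case True
    then have "{b..n} = {0 + b..(n - b) + b}"
      by simp
    then show ?thesis
      using True unfolding num_partitions_upto_def
      by (simp only: sum.shift_bounds_cl_nat_ivl atMost_atLeast0) simp
  qed simp
  finally show ?thesis .
qed

lemma num_partitions_upto_Cons:
  assumes "b > 0"
  shows "num_partitions_upto (b # L) n = (\<Sum>j\<le>n div b. num_partitions_upto L (n - j * b))"
proof (induction n rule: less_induct)
  case (less n)
  show ?case
  proof (cases "b \<le> n")
    case True
    then have "num_partitions_upto (b # L) n = num_partitions_upto L n + num_partitions_upto (b # L) (n - b)"
      using num_partitions_upto_Cons_step[OF assms] by simp
    also have "num_partitions_upto (b # L) (n - b) = (\<Sum>j\<le>(n - b) div b. num_partitions_upto L (n - b - j * b))"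
      using less.IH assms True by simp
    finally show ?thesis
      using sum_multiples_step[OF assms True, of "num_partitions_upto L"] by simp
  next
    case False
    then show ?thesis
      using num_partitions_upto_Cons_step[OF assms, of L n] by simp
  qed
qed

lemma sum_num_partitions_window:
  assumes "b > 0"
  shows "(\<Sum>m\<in>{n<..n + b}. num_partitions (b # L) m) = num_partitions_upto L (n + b)"
proof -
  have "{..n + b} = {..n} \<union> {n<..n + b}"
    by auto
  then have "num_partitions_upto (b # L) (n + b) =
      num_partitions_upto (b # L) n + (\<Sum>m\<in>{n<..n + b}. num_partitions (b # L) m)"
    unfolding num_partitions_upto_def by (simp only:) (rule sum.union_disjoint, auto)
  then show ?thesis
    using num_partitions_upto_Cons_step[OF assms, of L "n + b"] by simp
qed

lemma num_partitions_upto_lower_bound: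
  assumes "\<forall>b\<in>set L. b > 0"
  shows "real n ^ length L \<le> fact (length L) * real (prod_list L) * real (num_partitions_upto L n)"
  using assms
proof (induction L arbitrary: n)
  case Nil
  then show ?case
    by (simp add: num_partitions_upto_def)
next
  case (Cons b L)
  define r where "r = length L"
  define c where "c = fact r * real (prod_list L)"
  have "b > 0"
    using Cons.prems by simp
  have "real n ^ Suc r \<le> real (Suc r) * real b * (\<Sum>j\<le>n div b. real (n - j * b) ^ r)"
    using power_Suc_le_sum_multiples[OF \<open>b > 0\<close>] .
  also have "\<dots> \<le> real (Suc r) * real b * (\<Sum>j\<le>n div b. c * real (num_partitions_upto L (n - j * b)))"
    using Cons by (intro mult_left_mono sum_mono) (auto simp: r_def c_def)
  also have "\<dots> = fact (length (b # L)) * real (prod_list (b # L)) * real (num_partitions_upto (b # L) n)"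
    by (simp add: num_partitions_upto_Cons[OF \<open>b > 0\<close>] r_def c_def sum_distrib_left mult_ac)
  finally show ?case
    by (simp add: r_def)
qed

lemma num_partitions_upto_upper_bound:
  assumes "\<forall>b\<in>set L. b > 0"
  shows "fact (length L) * real (prod_list L) * real (num_partitions_upto L n) \<le> (real n + real (sum_list L)) ^ length L"
  using assms
proof (induction L arbitrary: n)
  case Nil
  then show ?case
    by (simp add: num_partitions_upto_def)
next
  case (Cons b L)
  define r where "r = length L"
  define c where "c = fact r * real (prod_list L)"
  define s where "s = real (sum_list L)"
  have "b > 0"
    using Cons.prems by simp
  have "fact (length (b # L)) * real (prod_list (b # L)) * real (num_partitions_upto (b # L) n) =
      real (Suc r) * real b * (\<Sum>j\<le>n div b. c * real (num_partitions_upto L (n - j * b)))"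
    by (simp add: num_partitions_upto_Cons[OF \<open>b > 0\<close>] r_def c_def sum_distrib_left mult_ac)
  also have "\<dots> \<le> real (Suc r) * real b * (\<Sum>j\<le>n div b. (real (n - j * b) + s) ^ r)"
    using Cons by (intro mult_left_mono sum_mono) (auto simp: r_def c_def s_def)
  also have "\<dots> \<le> (real n + s + real b) ^ Suc r"
    using sum_multiples_le_power_Suc[OF \<open>b > 0\<close>] by (simp add: s_def)
  finally show ?case
    by (simp add: r_def s_def add_ac)
qed

lemma num_partitions_upto_limit:
  assumes "\<forall>b\<in>set L. b > 0"
  shows "(\<lambda>n. real (num_partitions_upto L n) / real n ^ length L) \<longlonglongrightarrow> 1 / (fact (length L) * real (prod_list L))"
proof -
  define r where "r = length L"
  define c where "c = fact r * real (prod_list L)"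
  define s where "s = real (sum_list L)"
  have "prod_list L \<noteq> 0"
    using assms by (auto simp: prod_list_zero_iff)
  then have "c > 0"
    by (simp add: c_def)
  have lower: "\<forall>\<^sub>F n in sequentially. 1 / c \<le> real (num_partitions_upto L n) / real n ^ r"
    using eventually_gt_at_top[of 0]
  proof eventually_elim
    case (elim n)
    then show ?case
      using num_partitions_upto_lower_bound[OF assms, of n] \<open>c > 0\<close>
      by (simp add: field_simps r_def c_def)
  qed
  have upper: "\<forall>\<^sub>F n in sequentially. real (num_partitions_upto L n) / real n ^ r \<le> (1 + s / real n) ^ r / c"
    using eventually_gt_at_top[of 0]
  proof eventually_elim
    case (elim n)
    then have "(1 + s / real n) ^ r = (real n + s) ^ r / real n ^ r"
      by (simp add: field_simps power_divide)
    then show ?case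
      using num_partitions_upto_upper_bound[OF assms, of n] \<open>c > 0\<close> elim
      by (simp add: field_simps r_def c_def s_def)
  qed
  have "(\<lambda>n. (1 + s / real n) ^ r / c) \<longlonglongrightarrow> (1 + 0) ^ r / c"
    by (intro tendsto_intros) (use \<open>c > 0\<close> in auto)
  then have "(\<lambda>n. real (num_partitions_upto L n) / real n ^ r) \<longlonglongrightarrow> 1 / c"
    by (intro tendsto_sandwich[OF lower upper tendsto_const]) simp
  then show ?thesis
    by (simp add: r_def c_def)
qed

section \<open>Schur's theorem\<close>

lemma num_partitions_0 [simp]: "num_partitions K 0 = 1"
  by (induction K) auto

lemma num_partitions_mono_add:
  assumes "num_partitions K m > 0"
  shows "num_partitions K n \<le> num_partitions K (n + m)"
  using assms
proof (induction K arbitrary: n m)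
  case Nil
  then show ?case
    by (simp split: if_splits)
next
  case (Cons b L)
  obtain j0 where j0: "j0 \<le> m div b" "num_partitions L (m - j0 * b) > 0"
    using Cons.prems by (metis (no_types, lifting) atMost_iff gr0I less_irrefl sum.neutral num_partitions.simps(2))
  have "j0 * b \<le> m"
    using j0(1) div_times_less_eq_dividend le_trans mult_le_mono1 by blast
  have "num_partitions (b # L) n = (\<Sum>j\<le>n div b. num_partitions L (n - j * b))"
    by simp
  also have "\<dots> \<le> (\<Sum>j\<le>n div b. num_partitions L (n + m - (j + j0) * b))"
  proof (rule sum_mono)
    fix j assume "j \<in> {..n div b}"
    then have "j * b \<le> n"
      by (metis atMost_iff div_times_less_eq_dividend le_trans mult_le_mono1)
    then have "n + m - (j + j0) * b = (n - j * b) + (m - j0 * b)"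
      using \<open>j0 * b \<le> m\<close> by (simp add: algebra_simps)
    then show "num_partitions L (n - j * b) \<le> num_partitions L (n + m - (j + j0) * b)"
      using Cons.IH[OF j0(2)] by simp
  qed
  also have "\<dots> = (\<Sum>i\<in>(\<lambda>j. j + j0) ` {..n div b}. num_partitions L (n + m - i * b))"
    by (simp add: sum.reindex)
  also have "\<dots> \<le> (\<Sum>i\<le>(n + m) div b. num_partitions L (n + m - i * b))"
  proof (rule sum_mono2)
    have "n div b + m div b \<le> (n + m) div b"
      by (cases "b = 0") (simp_all add: less_eq_div_iff_mult_less_eq add_mult_distrib add_mono)
    then show "(\<lambda>j. j + j0) ` {..n div b} \<subseteq> {..(n + m) div b}"
      using j0(1) by auto
  qed auto
  finally show ?case
    by simp
qed

lemma num_partitions_pos_member: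
  assumes "b \<in> set K"
  shows "num_partitions K b > 0"
  using assms
proof (induction K)
  case (Cons c L)
  show ?case
  proof (cases "b = c \<and> b > 0")
    case True
    then show ?thesis
      by (auto intro!: sum_pos2[where i = 1])
  next
    case False
    then show ?thesis
      using Cons by (auto intro!: sum_pos2[where i = 0])
  qed
qed simp

lemma num_partitions_eventually_mono:
  assumes "Gcd (set K) = 1"
  obtains F where "\<And>x y. x + F \<le> y \<Longrightarrow> num_partitions K x \<le> num_partitions K y"
proof -
  have add: "num_partitions K (x + y) > 0" if "num_partitions K x > 0" "num_partitions K y > 0" for x y
    using num_partitions_mono_add[OF that(2), of x] that(1) by simp
  have "\<exists>F. \<forall>m\<ge>F. m \<in> {m. num_partitions K m > 0}"
    by (rule additive_submonoid_contains_all_large[where A = "set K"])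
      (use add num_partitions_pos_member assms in auto)
  then obtain F where F: "\<forall>m\<ge>F. num_partitions K m > 0"
    by auto
  have "num_partitions K x \<le> num_partitions K y" if "x + F \<le> y" for x y
    using num_partitions_mono_add[of K "y - x" x] F that by (simp add: le_diff_conv2)
  then show ?thesis
    using that by blast
qed

lemma num_partitions_asymptotic:
  assumes "\<forall>x\<in>set (b # L). x > 0" "Gcd (set (b # L)) = 1"
  shows "(\<lambda>n. real (num_partitions (b # L) n) / real n ^ length L)
    \<longlonglongrightarrow> 1 / (fact (length L) * real (prod_list (b # L)))"
proof -
  have "b > 0"
    using assms(1) by simp
  obtain F where F: "\<And>x y. x + F \<le> y \<Longrightarrow> num_partitions (b # L) x \<le> num_partitions (b # L) y"
    using num_partitions_eventually_mono[OF assms(2)] by blast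
  have window_lower: "num_partitions_upto L (n + b) \<le> b * num_partitions (b # L) (n + (b + F))" for n
  proof -
    have "num_partitions_upto L (n + b) = (\<Sum>m\<in>{n<..n + b}. num_partitions (b # L) m)"
      using sum_num_partitions_window[OF \<open>b > 0\<close>] by simp
    also have "\<dots> \<le> (\<Sum>m\<in>{n<..n + b}. num_partitions (b # L) (n + (b + F)))"
      by (intro sum_mono F) auto
    finally show ?thesis
      by simp
  qed
  have window_upper: "b * num_partitions (b # L) (n + (b + F)) \<le> num_partitions_upto L (n + (b + 2 * F + b))" for n
  proof -
    have "b * num_partitions (b # L) (n + (b + F)) =
        (\<Sum>m\<in>{n + (b + 2 * F)<..n + (b + 2 * F) + b}. num_partitions (b # L) (n + (b + F)))"
      by simp
    also have "\<dots> \<le> (\<Sum>m\<in>{n + (b + 2 * F)<..n + (b + 2 * F) + b}. num_partitions (b # L) m)"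
      by (intro sum_mono F) auto
    also have "\<dots> = num_partitions_upto L (n + (b + 2 * F) + b)"
      by (rule sum_num_partitions_window[OF \<open>b > 0\<close>])
    finally show ?thesis
      by (simp only: add.assoc)
  qed
  have "(\<lambda>n. real b * real (num_partitions (b # L) n) / real n ^ length L)
      \<longlonglongrightarrow> 1 / (fact (length L) * real (prod_list L))"
  proof (rule tendsto_div_power_sandwich)
    show "(\<lambda>n. real (num_partitions_upto L n) / real n ^ length L)
        \<longlonglongrightarrow> 1 / (fact (length L) * real (prod_list L))"
      using assms(1) by (intro num_partitions_upto_limit) simp
    show "real (num_partitions_upto L (n + b)) \<le> real b * real (num_partitions (b # L) (n + (b + F)))"
      and "real b * real (num_partitions (b # L) (n + (b + F))) \<le> real (num_partitions_upto L (n + (b + 2 * F + b)))"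
      for n
      using window_lower[of n] window_upper[of n] by (simp_all only: of_nat_le_iff flip: of_nat_mult)
  qed
  then have "(\<lambda>n. real b * real (num_partitions (b # L) n) / real n ^ length L / real b)
      \<longlonglongrightarrow> 1 / (fact (length L) * real (prod_list L)) / real b"
    by (rule tendsto_divide[OF _ tendsto_const]) (use \<open>b > 0\<close> in simp)
  then show ?thesis
    using \<open>b > 0\<close> by (simp add: mult_ac)
qed

section \<open>Total number of parts\<close>

lemma partitions_in_empty: "partitions_in {} n = (if n = 0 then {{#}} else {})"
  by (auto simp: partitions_in_def)

lemma partitions_in_insert:
  assumes "b \<notin> B" "b > 0"
  shows "partitions_in (insert b B) n =
    (\<Union>j\<le>n div b. (\<lambda>M. M + replicate_mset j b) ` partitions_in B (n - j * b))"
proof (intro equalityI subsetI)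
  fix M assume M: "M \<in> partitions_in (insert b B) n"
  define j where "j = count M b"
  define M' where "M' = M - replicate_mset j b"
  have M_eq: "M = M' + replicate_mset j b"
    unfolding M'_def j_def by (metis count_le_replicate_mset_subset_eq order_refl subset_mset.diff_add)
  have "b \<notin># M'"
    by (simp add: M'_def j_def flip: count_eq_zero_iff)
  then have "set_mset M' \<subseteq> B"
    using M M_eq by (auto simp: partitions_in_def)
  moreover have "sum_mset M = sum_mset M' + j * b"
    using M_eq by simp
  ultimately have "M' \<in> partitions_in B (n - j * b)" "j \<le> n div b"
    using M assms(2) by (auto simp: partitions_in_def less_eq_div_iff_mult_less_eq)
  then show "M \<in> (\<Union>j\<le>n div b. (\<lambda>M. M + replicate_mset j b) ` partitions_in B (n - j * b))"
    using M_eq by blast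
next
  fix M assume "M \<in> (\<Union>j\<le>n div b. (\<lambda>M. M + replicate_mset j b) ` partitions_in B (n - j * b))"
  then obtain j M' where "j \<le> n div b" "M' \<in> partitions_in B (n - j * b)" "M = M' + replicate_mset j b"
    by auto
  moreover have "j * b \<le> n"
    using \<open>j \<le> n div b\<close> assms(2) by (simp add: less_eq_div_iff_mult_less_eq)
  ultimately show "M \<in> partitions_in (insert b B) n"
    by (auto simp: partitions_in_def)
qed

lemma finite_card_partitions_in:
  assumes "distinct L" "\<forall>x\<in>set L. x > 0"
  shows "finite (partitions_in (set L) n) \<and> card (partitions_in (set L) n) = num_partitions L n"
  using assms
proof (induction L arbitrary: n)
  case Nil
  then show ?case
    by (simp add: partitions_in_empty)
next
  case (Cons b L)
  define S where "S j = (\<lambda>M. M + replicate_mset j b) ` partitions_in (set L) (n - j * b)" for j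
  have "b \<notin> set L" "b > 0"
    using Cons.prems by auto
  then have eq: "partitions_in (set (b # L)) n = (\<Union>j\<le>n div b. S j)"
    by (simp add: partitions_in_insert S_def)
  have "finite (S j)" and card_S: "card (S j) = num_partitions L (n - j * b)" for j
    unfolding S_def using Cons by (auto simp: card_image inj_on_def)
  moreover have "count M b = j" if "M \<in> S j" for M j
    using that \<open>b \<notin> set L\<close> by (auto simp: S_def partitions_in_def count_eq_zero_iff)
  then have "S i \<inter> S j = {}" if "i \<noteq> j" for i j
    using that by blast
  ultimately have "card (\<Union>j\<le>n div b. S j) = (\<Sum>j\<le>n div b. card (S j))"
    by (intro card_UN_disjoint) auto
  then show ?case
    using eq \<open>\<And>j. finite (S j)\<close> card_S by simp
qed

lemma finite_partitions_in:
  assumes "finite A" "\<forall>a\<in>A. a > 0"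
  shows "finite (partitions_in A n)"
  using finite_card_partitions_in[of "sorted_list_of_set A" n] assms by simp

definition total_multiplicity :: "nat set \<Rightarrow> nat \<Rightarrow> nat \<Rightarrow> nat" where
  "total_multiplicity A a n = (\<Sum>M\<in>partitions_in A n. count M a)"

lemma total_multiplicity_less:
  assumes "n < a"
  shows "total_multiplicity A a n = 0"
proof -
  have "count M a = 0" if "M \<in> partitions_in A n" for M
  proof (rule ccontr)
    assume "count M a \<noteq> 0"
    then have "a \<le> sum_mset M"
      by (metis count_eq_zero_iff sum_mset.remove le_add1)
    then show False
      using that assms by (simp add: partitions_in_def)
  qed
  then show ?thesis
    by (simp add: total_multiplicity_def)
qed

lemma total_multiplicity_add:
  assumes "finite A" "\<forall>x\<in>A. x > 0" "a \<in> A"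
  shows "total_multiplicity A a (n + a) = total_multiplicity A a n + card (partitions_in A n)"
proof -
  have "add_mset a ` partitions_in A n \<subseteq> partitions_in A (n + a)"
    using assms(3) by (auto simp: partitions_in_def)
  moreover have "count M a = 0" if "M \<in> partitions_in A (n + a) - add_mset a ` partitions_in A n" for M
  proof (rule ccontr)
    assume "count M a \<noteq> 0"
    then have "M = add_mset a (M - {#a#})" "sum_mset M = sum_mset (M - {#a#}) + a"
      by (simp_all add: count_eq_zero_iff sum_mset.remove)
    then have "M \<in> add_mset a ` partitions_in A n"
      using that by (auto simp: partitions_in_def dest: in_diffD)
    then show False
      using that by blast
  qed
  ultimately have "total_multiplicity A a (n + a) = (\<Sum>M\<in>add_mset a ` partitions_in A n. count M a)"
    unfolding total_multiplicity_def using finite_partitions_in[OF assms(1,2)]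
    by (intro sum.mono_neutral_right) auto
  also have "\<dots> = (\<Sum>M\<in>partitions_in A n. count M a + 1)"
    by (subst sum.reindex) (auto simp: inj_on_def)
  finally show ?thesis
    by (simp add: total_multiplicity_def sum_Suc)
qed

lemma total_multiplicity_eq_num_partitions:
  assumes "distinct L" "\<forall>x\<in>set L. x > 0" "a \<in> set L"
  shows "total_multiplicity (set L) a (n + a) = num_partitions (a # L) n"
proof (induction n rule: less_induct)
  case (less n)
  have "a > 0"
    using assms by simp
  have step: "total_multiplicity (set L) a (n + a) = total_multiplicity (set L) a n + num_partitions L n"
    using total_multiplicity_add[of "set L" a n] finite_card_partitions_in[OF assms(1,2)] assms by simp
  show ?case
  proof (cases "a \<le> n")
    case True
    then have "total_multiplicity (set L) a n = num_partitions (a # L) (n - a)"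
      using less.IH[of "n - a"] \<open>a > 0\<close> by simp
    then show ?thesis
      using step num_partitions_Cons_step[OF \<open>a > 0\<close>, of L n] True by simp
  next
    case False
    then show ?thesis
      using step num_partitions_Cons_step[OF \<open>a > 0\<close>, of L n] total_multiplicity_less[of n a] by simp
  qed
qed

lemma NpA_eq_sum_total_multiplicity:
  assumes "finite A"
  shows "NpA A n = (\<Sum>a\<in>A. total_multiplicity A a n)"
proof -
  have "size M = (\<Sum>a\<in>A. count M a)" if "M \<in> partitions_in A n" for M
  proof -
    have "size M = (\<Sum>a\<in>set_mset M. count M a)"
      by (simp add: size_multiset_overloaded_eq)
    also have "\<dots> = (\<Sum>a\<in>A. count M a)"
      using that assms by (intro sum.mono_neutral_left) (auto simp: partitions_in_def count_eq_zero_iff)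
    finally show ?thesis .
  qed
  then show ?thesis
    unfolding NpA_def total_multiplicity_def by (simp add: sum.swap[of _ A])
qed

lemma NpA_add_eq_sum_num_partitions:
  assumes "distinct L" "\<forall>x\<in>set L. x > 0" "\<forall>x\<in>set L. x \<le> m"
  shows "NpA (set L) (n + m) = (\<Sum>a\<in>set L. num_partitions (a # L) (n + (m - a)))"
proof -
  have "total_multiplicity (set L) a (n + m) = num_partitions (a # L) (n + (m - a))" if "a \<in> set L" for a
  proof -
    have "a \<le> m"
      using assms(3) that by blast
    then have "n + (m - a) + a = n + m"
      by simp
    then show ?thesis
      using total_multiplicity_eq_num_partitions[OF assms(1,2) that, of "n + (m - a)"] by simp
  qed
  then show ?thesis
    by (simp add: NpA_eq_sum_total_multiplicity)
qed

theorem theorem8: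
  fixes A :: "nat set" and k :: nat
  assumes "finite A" and "card A = k" and "\<forall>a\<in>A. a > 0" and "Gcd A = 1"
  shows "(\<lambda>n. real (NpA A n)) \<sim>[at_top]
         (\<lambda>n. (1 / fact k) * ((\<Sum>a\<in>A. 1 / real a) / (\<Prod>a\<in>A. real a)) * real n ^ k)"
proof -
  obtain L where L: "distinct L" "set L = A"
    using finite_distinct_list[OF assms(1)] by blast
  have "length L = k" "A \<noteq> {}" "prod_list L = (\<Prod>a\<in>A. a)"
    using L assms(2,4) by (auto simp: distinct_card prod.distinct_set_conv_list)
  define C where "C = (\<Sum>a\<in>A. 1 / (fact k * real (a * prod_list L)))"
  have C_eq: "C = (1 / fact k) * ((\<Sum>a\<in>A. 1 / real a) / (\<Prod>a\<in>A. real a))"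
    by (simp add: C_def \<open>prod_list L = _\<close> sum_distrib_left sum_divide_distrib)
  have "(\<Prod>a\<in>A. real a) > 0"
    using assms(3) by (intro prod_pos) auto
  then have "C > 0"
    using assms(1,3) \<open>A \<noteq> {}\<close> unfolding C_def by (intro sum_pos) (auto simp: \<open>prod_list L = _\<close>)
  have "(\<lambda>n. real (num_partitions (a # L) n) / real n ^ k) \<longlonglongrightarrow> 1 / (fact k * real (a * prod_list L))"
    if "a \<in> A" for a
    using num_partitions_asymptotic[of a L] that L assms(3,4) \<open>length L = k\<close> by (simp add: insert_absorb)
  then have "(\<lambda>n. \<Sum>a\<in>A. real (num_partitions (a # L) (n + (Max A - a))) / real (n + Max A) ^ k) \<longlonglongrightarrow> C"
    unfolding C_def by (intro tendsto_sum tendsto_div_power_shift)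
  then have "(\<lambda>n. real (NpA A (n + Max A)) / real (n + Max A) ^ k) \<longlonglongrightarrow> C"
    using NpA_add_eq_sum_num_partitions[of L "Max A"] L assms(1,3)
    by (simp add: sum_divide_distrib)
  then have "(\<lambda>n. real (NpA A n) / real n ^ k) \<longlonglongrightarrow> C"
    by (rule LIMSEQ_offset)
  then have "(\<lambda>n. real (NpA A n)) \<sim>[at_top] (\<lambda>n. C * real n ^ k)"
    using \<open>C > 0\<close> by (intro asymp_equivI'_const) auto
  then show ?thesis
    by (simp only: C_eq)
qed

end
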